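(* Let $C_i=\{c_i^1,\ldots,c_i^{j_i}\}$, $1\le i\le k$, be pairwise disjoint sets of variables, and for $1\le u\le n$ let $F_u=\{f_u^1,\ldots,f_u^{n+1}\}\subseteq\mathbb{C}[\bigcup_{i=1}^kC_i]$ be sets of polynomials such that: (i) for each fixed $u$, the polynomials $f_u^1,\ldots,f_u^{n+1}$ are (nonzero) multihomogeneous polynomials in some sets of variables $C_{u^1},\ldots,C_{u^{s_u}}$, all with the same multidegree; (ii) if $u\neq v$ then $F_u$ and $F_v$ involve different (disjoint) collections of the sets $C_i$; (iii) for each $u$, if $l\neq m$ then no monomial of $f_u^l$ is a monomial of $f_u^m$. Let $A=(f_u^l)_{1\le u\le n,\,1\le l\le n+1}$ be the $n\times(n+1)$ matrix, let $O$ be any $n\times(n+1)$ matrix over $\mathbb{T}$, and let $\mathrm{Cram}_O(A)=(S_1,\ldots,S_{n+1})$. Then: 1. $S_1,\ldots,S_{n+1}$ are nonzero multihomogeneous polynomials in the sets of variables $C_1,\ldots,C_k$, all with the same multidegree; 2. for each $l$, if $\sigma\ne\tau$ are two different bijections $\{1,\dots,n\}\to\{1,\dots,n+1\}\setminus\{l\}$ which appear in the expansion of $S_l$, then every monomial of $\prod_{u=1}^n f_u^{\sigma(u)}$ is different from every monomial of $\prod_{u=1}^n f_u^{\tau(u)}$; 3. if $l\ne m$, then $S_l$ and $S_m$ have no common monomial.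
   Context: $\mathbb{T}=(\mathbb{R},\max,+)$. For an $n\times n$ tropical matrix $O$, $|O|_t=\max_{\sigma\in\Sigma_n}\sum_i o_{i\sigma(i)}$. For an $n\times n$ matrix $A$ over a ring, the pseudo-determinant is $\Delta_O(A)=\sum(-1)^{i(\sigma)}a_{1\sigma(1)}\cdots a_{n\sigma(n)}$, summed over those $\sigma\in\Sigma_n$ with $\sum_i o_{i\sigma(i)}=|O|_t$ (these are the permutations "appearing in the expansion"), $(-1)^{i(\sigma)}$ being the sign. For $n\times(n+1)$ matrices, $O^{i}$, $A^{i}$ denote the matrices with the $i$-th column deleted, and $\mathrm{Cram}_O(A)=(S_1,\ldots,S_{n+1})$ with $S_i=\Delta_{O^{i}}(A^{i})$. *)

theory Defs
  imports Complex_Main "HOL-Library.Poly_Mapping" "HOL-Combinatorics.Permutations"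
begin

text \<open>Multivariate polynomials over the complex numbers in variables indexed by nat:
  a monomial is a finitely supported exponent vector, a polynomial is a finitely
  supported map from monomials to coefficients (convolution product).
  The monomials of a polynomial p are exactly Poly_Mapping.keys p.\<close>

type_synonym mpoly = "(nat \<Rightarrow>\<^sub>0 nat) \<Rightarrow>\<^sub>0 complex"

definition deg_in :: "nat set \<Rightarrow> (nat \<Rightarrow>\<^sub>0 nat) \<Rightarrow> nat" where
  "deg_in S m = (\<Sum>x\<in>S. Poly_Mapping.lookup m x)"

definition multihom :: "(nat \<Rightarrow> nat set) \<Rightarrow> nat set \<Rightarrow> (nat \<Rightarrow> nat) \<Rightarrow> mpoly \<Rightarrow> bool" where
  "multihom C J d f \<longleftrightarrow> f \<noteq> 0 \<and>
     (\<forall>m\<in>Poly_Mapping.keys f. Poly_Mapping.keys m \<subseteq> (\<Union>i\<in>J. C i) \<and> (\<forall>i\<in>J. deg_in (C i) m = d i))"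

text \<open>Matrices are functions nat => nat => _, indices 0-based.
  Tropical determinant of an n x n tropical matrix.\<close>
definition tdet :: "nat \<Rightarrow> (nat \<Rightarrow> nat \<Rightarrow> real) \<Rightarrow> real" where
  "tdet n T = Max {(\<Sum>i<n. T i (p i)) | p. p permutes {..<n}}"

text \<open>Pseudo-determinant Delta_O(A): signed sum over the permutations appearing in
  the expansion of the tropical determinant of T.\<close>
definition pdet :: "nat \<Rightarrow> (nat \<Rightarrow> nat \<Rightarrow> real) \<Rightarrow> (nat \<Rightarrow> nat \<Rightarrow> 'a::comm_ring_1) \<Rightarrow> 'a" where
  "pdet n T A = (\<Sum>p\<in>{p. p permutes {..<n} \<and> (\<Sum>i<n. T i (p i)) = tdet n T}.
       of_int (sign p) * (\<Prod>i<n. A i (p i)))"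

definition delcol :: "nat \<Rightarrow> (nat \<Rightarrow> nat \<Rightarrow> 'a) \<Rightarrow> nat \<Rightarrow> nat \<Rightarrow> 'a" where
  "delcol l M = (\<lambda>i j. M i (if j < l then j else Suc j))"

text \<open>Cram_O(A) for n x (n+1) matrices: component l (0-based, l \<le> n).\<close>
definition cram :: "nat \<Rightarrow> (nat \<Rightarrow> nat \<Rightarrow> real) \<Rightarrow> (nat \<Rightarrow> nat \<Rightarrow> 'a::comm_ring_1) \<Rightarrow> nat \<Rightarrow> 'a" where
  "cram n T A l = pdet n (delcol l T) (delcol l A)"

end

(* If the rows of a matrix of polynomials involve pairwise disjoint sets of variables, then a
   monomial of a product taking one entry from each row factors uniquely into monomials of the
   factors, and its coefficient is the product of theirs. So two such products that choose
   different entries in some row have no monomial in common, since the entries of a row share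
   none. Hence the terms of the pseudo-determinant S_l cannot cancel: its monomials are exactly
   those of the products over the permutations appearing in its expansion, and each of these
   products is multihomogeneous, with multidegree the sum of the row multidegrees whatever l is.
   For l ~= m every selection of entries for S_m uses column l in some row, while no selection
   for S_l does; this separates the monomials of S_l and S_m. *)

theory Submission
  imports Defs "HOL-Library.Disjoint_Sets"
begin

definition mvars :: "(('v \<Rightarrow>\<^sub>0 nat) \<Rightarrow>\<^sub>0 'a::zero) \<Rightarrow> 'v set" where
  "mvars p = (\<Union>m\<in>Poly_Mapping.keys p. Poly_Mapping.keys m)"

lemma mvars_subset_iff:
  "mvars p \<subseteq> V \<longleftrightarrow> (\<forall>m\<in>Poly_Mapping.keys p. Poly_Mapping.keys m \<subseteq> V)"
  by (auto simp: mvars_def)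

lemma mvars_mult: "mvars (p * q) \<subseteq> mvars p \<union> mvars q"
  using keys_mult[of p q] keys_add by (fastforce simp: mvars_def)

lemma mvars_prod: "mvars (\<Prod>u\<in>I. g u) \<subseteq> (\<Union>u\<in>I. mvars (g u))"
proof (induction I rule: infinite_finite_induct)
  case (insert a F)
  then show ?case using mvars_mult[of "g a" "prod g F"] by auto
qed (auto simp: mvars_def)

lemma add_eq_add_disjoint_keysD:
  fixes a b a' b' :: "'k \<Rightarrow>\<^sub>0 'b::monoid_add"
  assumes "Poly_Mapping.keys a \<subseteq> V" "Poly_Mapping.keys a' \<subseteq> V"
    and "Poly_Mapping.keys b \<subseteq> W" "Poly_Mapping.keys b' \<subseteq> W"
    and "V \<inter> W = {}" and "a + b = a' + b'"
  shows "a = a' \<and> b = b'"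
proof -
  have "Poly_Mapping.lookup a x = Poly_Mapping.lookup a' x
      \<and> Poly_Mapping.lookup b x = Poly_Mapping.lookup b' x" for x
  proof -
    have sum: "Poly_Mapping.lookup a x + Poly_Mapping.lookup b x
        = Poly_Mapping.lookup a' x + Poly_Mapping.lookup b' x"
      using assms(6) by (metis lookup_add)
    show ?thesis
    proof (cases "x \<in> V")
      case True
      then have "x \<notin> Poly_Mapping.keys b" "x \<notin> Poly_Mapping.keys b'" using assms(3-5) by auto
      then show ?thesis using sum by (simp add: in_keys_iff)
    next
      case False
      then have "x \<notin> Poly_Mapping.keys a" "x \<notin> Poly_Mapping.keys a'" using assms(1,2) by auto
      then show ?thesis using sum by (simp add: in_keys_iff)
    qed
  qed
  then show ?thesis by (auto intro: poly_mapping_eqI)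
qed

lemma lookup_mult_disjoint_mvars:
  fixes p q :: "('v \<Rightarrow>\<^sub>0 nat) \<Rightarrow>\<^sub>0 'a::comm_semiring_0"
  assumes "mvars p \<subseteq> V" "mvars q \<subseteq> W" "V \<inter> W = {}"
    and "Poly_Mapping.keys a \<subseteq> V" "Poly_Mapping.keys b \<subseteq> W"
  shows "Poly_Mapping.lookup (p * q) (a + b) = Poly_Mapping.lookup p a * Poly_Mapping.lookup q b"
proof -
  have no_other_factorization: "(Poly_Mapping.lookup q b' when a + b = a' + b') = 0"
    if "a' \<noteq> a" "Poly_Mapping.keys a' \<subseteq> V" for a' b'
  proof (cases "b' \<in> Poly_Mapping.keys q")
    case True
    then have "Poly_Mapping.keys b' \<subseteq> W" using assms(2) by (auto simp: mvars_subset_iff)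
    then have "a + b \<noteq> a' + b'"
      using add_eq_add_disjoint_keysD[OF assms(4) that(2) assms(5) _ assms(3)] that(1) by blast
    then show ?thesis by simp
  qed (simp add: in_keys_iff)
  have "Poly_Mapping.lookup p a' * Sum_any (\<lambda>b'. Poly_Mapping.lookup q b' when a + b = a' + b')
      = (Poly_Mapping.lookup p a * Poly_Mapping.lookup q b when a' = a)" for a'
  proof (cases "a' = a")
    case False
    show ?thesis
    proof (cases "a' \<in> Poly_Mapping.keys p")
      case True
      then have "Poly_Mapping.keys a' \<subseteq> V" using assms(1) by (auto simp: mvars_subset_iff)
      then show ?thesis using False by (simp add: no_other_factorization)
    qed (simp add: in_keys_iff False)
  qed simp
  then show ?thesis by (simp add: lookup_mult)
qed

lemma keys_prod_disjoint_mvars: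
  fixes g :: "'i \<Rightarrow> ('v \<Rightarrow>\<^sub>0 nat) \<Rightarrow>\<^sub>0 'a::{comm_semiring_1, semiring_no_zero_divisors}"
  assumes "finite I" "\<And>u. u \<in> I \<Longrightarrow> mvars (g u) \<subseteq> V u" "disjoint_family_on V I"
  shows "Poly_Mapping.keys (\<Prod>u\<in>I. g u)
    = {\<Sum>u\<in>I. m u | m. \<forall>u\<in>I. m u \<in> Poly_Mapping.keys (g u)}"
  using assms
proof (induction I rule: finite_induct)
  case (insert a F)
  let ?P = "\<Prod>u\<in>F. g u" and ?W = "\<Union>u\<in>F. V u"
  have IH: "Poly_Mapping.keys ?P = {\<Sum>u\<in>F. m u | m. \<forall>u\<in>F. m u \<in> Poly_Mapping.keys (g u)}"
    using insert.IH insert.prems disjoint_family_on_mono[of F "insert a F"] by blast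
  have vars_a: "mvars (g a) \<subseteq> V a" using insert.prems(1) by simp
  have vars_P: "mvars ?P \<subseteq> ?W" using mvars_prod[of g F] insert.prems(1) by blast
  have "V a \<inter> V u = {}" if "u \<in> F" for u
    using disjoint_family_onD[OF insert.prems(2), of a u] that insert.hyps(2) by auto
  then have disj: "V a \<inter> ?W = {}" by blast
  show ?case
  proof (intro equalityI subsetI)
    fix M assume "M \<in> Poly_Mapping.keys (\<Prod>u\<in>insert a F. g u)"
    then obtain x y where xy: "x \<in> Poly_Mapping.keys (g a)" "y \<in> Poly_Mapping.keys ?P" "M = x + y"
      using keys_mult[of "g a" ?P] insert.hyps by auto
    then obtain m where m: "\<forall>u\<in>F. m u \<in> Poly_Mapping.keys (g u)" "y = (\<Sum>u\<in>F. m u)"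
      using IH by auto
    have "(\<Sum>u\<in>F. (m(a := x)) u) = (\<Sum>u\<in>F. m u)"
      using insert.hyps(2) by (intro sum.cong) auto
    then have "M = (\<Sum>u\<in>insert a F. (m(a := x)) u)" using xy m insert.hyps by simp
    moreover have "\<forall>u\<in>insert a F. (m(a := x)) u \<in> Poly_Mapping.keys (g u)" using xy m by simp
    ultimately show "M \<in> {\<Sum>u\<in>insert a F. m u | m. \<forall>u\<in>insert a F. m u \<in> Poly_Mapping.keys (g u)}"
      by blast
  next
    fix M assume "M \<in> {\<Sum>u\<in>insert a F. m u | m. \<forall>u\<in>insert a F. m u \<in> Poly_Mapping.keys (g u)}"
    then obtain m where m: "\<forall>u\<in>insert a F. m u \<in> Poly_Mapping.keys (g u)" "M = m a + (\<Sum>u\<in>F. m u)"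
      using insert.hyps by auto
    have in_P: "(\<Sum>u\<in>F. m u) \<in> Poly_Mapping.keys ?P" using IH m(1) by auto
    have "Poly_Mapping.lookup (g a * ?P) M
        = Poly_Mapping.lookup (g a) (m a) * Poly_Mapping.lookup ?P (\<Sum>u\<in>F. m u)"
      unfolding m(2) using m(1) in_P vars_a vars_P
      by (intro lookup_mult_disjoint_mvars[OF vars_a vars_P disj]) (auto simp: mvars_subset_iff)
    also have "\<dots> \<noteq> 0" using m(1) in_P by (simp add: in_keys_iff)
    finally show "M \<in> Poly_Mapping.keys (\<Prod>u\<in>insert a F. g u)"
      using insert.hyps by (simp add: in_keys_iff)
  qed
qed simp

lemma prod_nonzero_disjoint_mvars:
  fixes g :: "'i \<Rightarrow> ('v \<Rightarrow>\<^sub>0 nat) \<Rightarrow>\<^sub>0 'a::{comm_semiring_1, semiring_no_zero_divisors}"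
  assumes "finite I" "\<And>u. u \<in> I \<Longrightarrow> mvars (g u) \<subseteq> V u" "disjoint_family_on V I"
    and "\<And>u. u \<in> I \<Longrightarrow> g u \<noteq> 0"
  shows "(\<Prod>u\<in>I. g u) \<noteq> 0"
proof -
  have "\<forall>u\<in>I. \<exists>x. x \<in> Poly_Mapping.keys (g u)" using assms(4) by (simp add: ex_in_conv)
  then obtain m where "\<forall>u\<in>I. m u \<in> Poly_Mapping.keys (g u)" by metis
  then have "(\<Sum>u\<in>I. m u) \<in> Poly_Mapping.keys (\<Prod>u\<in>I. g u)"
    using keys_prod_disjoint_mvars[OF assms(1-3)] by blast
  then show ?thesis by auto
qed

lemma sum_eq_sum_disjoint_keysD:
  fixes m m' :: "'i \<Rightarrow> 'k \<Rightarrow>\<^sub>0 'b::comm_monoid_add"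
  assumes "finite I" "\<And>u. u \<in> I \<Longrightarrow> Poly_Mapping.keys (m u) \<subseteq> V u"
    and "\<And>u. u \<in> I \<Longrightarrow> Poly_Mapping.keys (m' u) \<subseteq> V u" and "disjoint_family_on V I"
    and "(\<Sum>u\<in>I. m u) = (\<Sum>u\<in>I. m' u)" and "v \<in> I"
  shows "m v = m' v"
proof (rule poly_mapping_eqI)
  fix x
  have lookup_block: "Poly_Mapping.lookup (\<Sum>u\<in>I. h u) x = Poly_Mapping.lookup (h v) x"
    if "x \<in> V v" and h_vars: "\<And>u. u \<in> I \<Longrightarrow> Poly_Mapping.keys (h u) \<subseteq> V u"
    for h :: "'i \<Rightarrow> 'k \<Rightarrow>\<^sub>0 'b"
  proof -
    have "x \<notin> Poly_Mapping.keys (h u)" if "u \<in> I - {v}" for u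
    proof -
      have "V u \<inter> V v = {}" using disjoint_family_onD[OF assms(4)] that \<open>v \<in> I\<close> by auto
      then show ?thesis using \<open>x \<in> V v\<close> h_vars[of u] that by auto
    qed
    then show ?thesis
      by (simp add: lookup_sum in_keys_iff
          sum.remove[OF assms(1,6), of "\<lambda>u. Poly_Mapping.lookup (h u) x"])
  qed
  show "Poly_Mapping.lookup (m v) x = Poly_Mapping.lookup (m' v) x"
  proof (cases "x \<in> V v")
    case True
    then show ?thesis using lookup_block[of m] lookup_block[of m'] assms(2,3,5) by metis
  next
    case False
    then have "x \<notin> Poly_Mapping.keys (m v)" "x \<notin> Poly_Mapping.keys (m' v)"
      using assms(2,3,6) by auto
    then show ?thesis by (simp add: in_keys_iff)
  qed
qed

lemma keys_prod_disjoint_if_selections_differ: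
  fixes f :: "'i \<Rightarrow> 'j \<Rightarrow> ('v \<Rightarrow>\<^sub>0 nat) \<Rightarrow>\<^sub>0 'a::{comm_semiring_1, semiring_no_zero_divisors}"
  assumes "finite I" and vars: "\<And>u l. u \<in> I \<Longrightarrow> l \<in> L \<Longrightarrow> mvars (f u l) \<subseteq> V u"
    and disj: "disjoint_family_on V I"
    and entries: "\<And>u l l'. u \<in> I \<Longrightarrow> l \<in> L \<Longrightarrow> l' \<in> L \<Longrightarrow> l \<noteq> l' \<Longrightarrow>
      Poly_Mapping.keys (f u l) \<inter> Poly_Mapping.keys (f u l') = {}"
    and "\<sigma> ` I \<subseteq> L" "\<tau> ` I \<subseteq> L" "u\<^sub>0 \<in> I" "\<sigma> u\<^sub>0 \<noteq> \<tau> u\<^sub>0"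
  shows "Poly_Mapping.keys (\<Prod>u\<in>I. f u (\<sigma> u)) \<inter> Poly_Mapping.keys (\<Prod>u\<in>I. f u (\<tau> u)) = {}"
proof -
  have keys_sel: "Poly_Mapping.keys (\<Prod>u\<in>I. f u (\<rho> u))
      = {\<Sum>u\<in>I. m u | m. \<forall>u\<in>I. m u \<in> Poly_Mapping.keys (f u (\<rho> u))}"
    if "\<rho> ` I \<subseteq> L" for \<rho>
  proof (rule keys_prod_disjoint_mvars[OF assms(1) _ disj])
    show "mvars (f u (\<rho> u)) \<subseteq> V u" if "u \<in> I" for u
      using vars[OF that] \<open>\<rho> ` I \<subseteq> L\<close> that by (simp add: image_subset_iff)
  qed
  have monomial_vars: "Poly_Mapping.keys x \<subseteq> V u"
    if "\<rho> ` I \<subseteq> L" "u \<in> I" "x \<in> Poly_Mapping.keys (f u (\<rho> u))" for \<rho> u x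
  proof -
    have "mvars (f u (\<rho> u)) \<subseteq> V u" using vars that(1,2) by (simp add: image_subset_iff)
    then show ?thesis using that(3) by (simp add: mvars_subset_iff)
  qed
  show ?thesis
  proof (rule ccontr)
    assume "\<not> ?thesis"
    then obtain M where "M \<in> Poly_Mapping.keys (\<Prod>u\<in>I. f u (\<sigma> u))"
      and "M \<in> Poly_Mapping.keys (\<Prod>u\<in>I. f u (\<tau> u))" by blast
    then obtain m m' where m: "\<forall>u\<in>I. m u \<in> Poly_Mapping.keys (f u (\<sigma> u))"
      and m': "\<forall>u\<in>I. m' u \<in> Poly_Mapping.keys (f u (\<tau> u))"
      and eq: "(\<Sum>u\<in>I. m u) = (\<Sum>u\<in>I. m' u)"
      unfolding keys_sel[OF assms(5)] keys_sel[OF assms(6)] by blast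
    have same: "m u\<^sub>0 = m' u\<^sub>0"
    proof (rule sum_eq_sum_disjoint_keysD[OF assms(1) _ _ disj eq assms(7)])
      show "Poly_Mapping.keys (m u) \<subseteq> V u" if "u \<in> I" for u
        using monomial_vars[OF assms(5) that] m that by blast
      show "Poly_Mapping.keys (m' u) \<subseteq> V u" if "u \<in> I" for u
        using monomial_vars[OF assms(6) that] m' that by blast
    qed
    have "\<sigma> u\<^sub>0 \<in> L" "\<tau> u\<^sub>0 \<in> L" using assms(5-7) by auto
    then have "Poly_Mapping.keys (f u\<^sub>0 (\<sigma> u\<^sub>0)) \<inter> Poly_Mapping.keys (f u\<^sub>0 (\<tau> u\<^sub>0)) = {}"
      using entries[OF assms(7) _ _ assms(8)] by simp
    moreover have "m u\<^sub>0 \<in> Poly_Mapping.keys (f u\<^sub>0 (\<sigma> u\<^sub>0))"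
      and "m u\<^sub>0 \<in> Poly_Mapping.keys (f u\<^sub>0 (\<tau> u\<^sub>0))"
      using m m' same assms(7) by auto
    ultimately show False by blast
  qed
qed

lemma keys_sum_disjoint_family:
  fixes g :: "'i \<Rightarrow> 'k \<Rightarrow>\<^sub>0 'b::comm_monoid_add"
  assumes "finite A" "disjoint_family_on (\<lambda>a. Poly_Mapping.keys (g a)) A"
  shows "Poly_Mapping.keys (\<Sum>a\<in>A. g a) = (\<Union>a\<in>A. Poly_Mapping.keys (g a))"
proof
  show "Poly_Mapping.keys (\<Sum>a\<in>A. g a) \<subseteq> (\<Union>a\<in>A. Poly_Mapping.keys (g a))"
    by (rule keys_sum)
  show "(\<Union>a\<in>A. Poly_Mapping.keys (g a)) \<subseteq> Poly_Mapping.keys (\<Sum>a\<in>A. g a)"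
  proof
    fix x assume "x \<in> (\<Union>a\<in>A. Poly_Mapping.keys (g a))"
    then obtain a where a: "a \<in> A" "x \<in> Poly_Mapping.keys (g a)" by blast
    have "x \<notin> Poly_Mapping.keys (g b)" if "b \<in> A - {a}" for b
      using a that disjoint_family_onD[OF assms(2), of a b] by blast
    then have "Poly_Mapping.lookup (\<Sum>a\<in>A. g a) x = Poly_Mapping.lookup (g a) x"
      by (simp add: lookup_sum in_keys_iff
          sum.remove[OF assms(1) a(1), of "\<lambda>b. Poly_Mapping.lookup (g b) x"])
    then show "x \<in> Poly_Mapping.keys (\<Sum>a\<in>A. g a)" using a(2) by (simp add: in_keys_iff)
  qed
qed

lemma keys_of_int_sign_mult:
  fixes X :: "'k::monoid_add \<Rightarrow>\<^sub>0 'b::ring_1"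
  shows "Poly_Mapping.keys (of_int (sign p) * X) = Poly_Mapping.keys X"
  by (simp add: sign_def)

definition skip :: "nat \<Rightarrow> nat \<Rightarrow> nat" where
  "skip l j = (if j < l then j else Suc j)"

lemma delcol_skip: "delcol l M i j = M i (skip l j)"
  by (simp add: delcol_def skip_def)

lemma inj_skip: "inj (skip l)"
  by (auto simp: inj_def skip_def split: if_splits)

lemma skip_neq: "skip l j \<noteq> l"
  by (simp add: skip_def)

lemma skip_less_Suc: "j < n \<Longrightarrow> skip l j < Suc n"
  by (simp add: skip_def)

lemma ex_skip_eq: "l < Suc n \<Longrightarrow> l' < Suc n \<Longrightarrow> l' \<noteq> l \<Longrightarrow> \<exists>j<n. skip l j = l'"
  by (rule exI[of _ "if l' < l then l' else l' - 1"]) (auto simp: skip_def)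

definition optimal_perms :: "nat \<Rightarrow> (nat \<Rightarrow> nat \<Rightarrow> real) \<Rightarrow> (nat \<Rightarrow> nat) set" where
  "optimal_perms n T = {p. p permutes {..<n} \<and> (\<Sum>i<n. T i (p i)) = tdet n T}"

lemma finite_optimal_perms: "finite (optimal_perms n T)"
  by (rule finite_subset[OF _ finite_permutations[of "{..<n}"]]) (auto simp: optimal_perms_def)

lemma optimal_perms_nonempty: "optimal_perms n T \<noteq> {}"
proof -
  let ?S = "{(\<Sum>i<n. T i (p i)) | p. p permutes {..<n}}"
  have "?S = (\<lambda>p. \<Sum>i<n. T i (p i)) ` {p. p permutes {..<n}}" by auto
  then have "finite ?S" using finite_permutations[of "{..<n}"] by simp
  moreover have "?S \<noteq> {}" using permutes_id[of "{..<n}"] by blast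
  ultimately have "Max ?S \<in> ?S" by (rule Max_in)
  then show ?thesis by (auto simp: optimal_perms_def tdet_def)
qed

lemma optimal_perms_less: "p \<in> optimal_perms n T \<Longrightarrow> u < n \<Longrightarrow> p u < n"
  using permutes_in_image[of p "{..<n}" u] by (simp add: optimal_perms_def)

lemma optimal_perms_differ:
  assumes "p \<in> optimal_perms n T" "q \<in> optimal_perms n T" "p \<noteq> q"
  shows "\<exists>u<n. p u \<noteq> q u"
proof (rule ccontr)
  assume "\<not> (\<exists>u<n. p u \<noteq> q u)"
  then have "p u = q u" for u
    using assms(1,2) permutes_not_in[of p "{..<n}" u] permutes_not_in[of q "{..<n}" u]
    by (cases "u < n") (auto simp: optimal_perms_def)
  then show False using assms(3) by blast
qed

lemma cram_eq_sum:
  "cram n T A l = (\<Sum>p\<in>optimal_perms n (delcol l T). of_int (sign p) * (\<Prod>i<n. A i (skip l (p i))))"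
  by (simp add: cram_def pdet_def optimal_perms_def delcol_skip)

locale row_separated_matrix =
  fixes n :: nat and V :: "nat \<Rightarrow> 'v set"
    and f :: "nat \<Rightarrow> nat \<Rightarrow> ('v \<Rightarrow>\<^sub>0 nat) \<Rightarrow>\<^sub>0 'a::idom"
  assumes entry_nonzero: "u < n \<Longrightarrow> l < Suc n \<Longrightarrow> f u l \<noteq> 0"
    and mvars_entry: "u < n \<Longrightarrow> l < Suc n \<Longrightarrow> mvars (f u l) \<subseteq> V u"
    and disjoint_rows: "disjoint_family_on V {..<n}"
    and disjoint_entries: "u < n \<Longrightarrow> l < Suc n \<Longrightarrow> l' < Suc n \<Longrightarrow> l \<noteq> l' \<Longrightarrow>
      Poly_Mapping.keys (f u l) \<inter> Poly_Mapping.keys (f u l') = {}"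
begin

lemma keys_prod_disjoint:
  assumes "\<forall>u<n. \<sigma> u < Suc n" "\<forall>u<n. \<tau> u < Suc n" "u\<^sub>0 < n" "\<sigma> u\<^sub>0 \<noteq> \<tau> u\<^sub>0"
  shows "Poly_Mapping.keys (\<Prod>u<n. f u (\<sigma> u)) \<inter> Poly_Mapping.keys (\<Prod>u<n. f u (\<tau> u)) = {}"
proof (rule keys_prod_disjoint_if_selections_differ[where L = "{..<Suc n}" and V = V])
  show "mvars (f u l) \<subseteq> V u" if "u \<in> {..<n}" "l \<in> {..<Suc n}" for u l
    using mvars_entry that by simp
  show "Poly_Mapping.keys (f u l) \<inter> Poly_Mapping.keys (f u l') = {}"
    if "u \<in> {..<n}" "l \<in> {..<Suc n}" "l' \<in> {..<Suc n}" "l \<noteq> l'" for u l l'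
    using disjoint_entries that by simp
qed (use assms disjoint_rows in auto)

lemma keys_prod_disjoint_if_bij:
  assumes "bij_betw \<sigma> {..<n} ({..<Suc n} - {l})" "bij_betw \<tau> {..<n} ({..<Suc n} - {l})"
    and "\<exists>u<n. \<sigma> u \<noteq> \<tau> u"
  shows "Poly_Mapping.keys (\<Prod>u<n. f u (\<sigma> u)) \<inter> Poly_Mapping.keys (\<Prod>u<n. f u (\<tau> u)) = {}"
proof -
  have "\<forall>u<n. \<sigma> u < Suc n" "\<forall>u<n. \<tau> u < Suc n"
    using bij_betwE[OF assms(1)] bij_betwE[OF assms(2)] by auto
  moreover obtain u where "u < n" "\<sigma> u \<noteq> \<tau> u" using assms(3) by blast
  ultimately show ?thesis by (rule keys_prod_disjoint)
qed

lemma prod_nonzero: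
  assumes "\<forall>u<n. \<sigma> u < Suc n"
  shows "(\<Prod>u<n. f u (\<sigma> u)) \<noteq> 0"
proof (rule prod_nonzero_disjoint_mvars[where V = V])
  show "mvars (f u (\<sigma> u)) \<subseteq> V u" "f u (\<sigma> u) \<noteq> 0" if "u \<in> {..<n}" for u
    using mvars_entry entry_nonzero assms that by simp_all
qed (use disjoint_rows in auto)

lemma keys_cram:
  "Poly_Mapping.keys (cram n T f l)
    = (\<Union>p\<in>optimal_perms n (delcol l T). Poly_Mapping.keys (\<Prod>u<n. f u (skip l (p u))))"
proof -
  have "Poly_Mapping.keys (\<Prod>u<n. f u (skip l (p u)))
      \<inter> Poly_Mapping.keys (\<Prod>u<n. f u (skip l (q u))) = {}"
    if p: "p \<in> optimal_perms n (delcol l T)" and q: "q \<in> optimal_perms n (delcol l T)"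
      and "p \<noteq> q" for p q
  proof -
    obtain u where u: "u < n" "p u \<noteq> q u" using optimal_perms_differ[OF p q \<open>p \<noteq> q\<close>] by blast
    then have "skip l (p u) \<noteq> skip l (q u)" by (simp add: inj_eq[OF inj_skip])
    moreover have "\<forall>u<n. skip l (p u) < Suc n" "\<forall>u<n. skip l (q u) < Suc n"
      using p q by (simp_all add: skip_less_Suc optimal_perms_less)
    ultimately show ?thesis using keys_prod_disjoint[OF _ _ u(1)] by simp
  qed
  then show ?thesis
    unfolding cram_eq_sum
    by (subst keys_sum_disjoint_family)
      (auto simp: finite_optimal_perms keys_of_int_sign_mult disjoint_family_on_def)
qed

lemma cram_nonzero: "cram n T f l \<noteq> 0"
proof -
  obtain p where p: "p \<in> optimal_perms n (delcol l T)" using optimal_perms_nonempty by blast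
  then have "(\<Prod>u<n. f u (skip l (p u))) \<noteq> 0"
    by (intro prod_nonzero) (simp add: skip_less_Suc optimal_perms_less)
  then show ?thesis using p keys_cram[of T l] by auto
qed

lemma keys_cram_disjoint:
  assumes "l < Suc n" "l' < Suc n" "l \<noteq> l'"
  shows "Poly_Mapping.keys (cram n T f l) \<inter> Poly_Mapping.keys (cram n T f l') = {}"
proof -
  have "Poly_Mapping.keys (\<Prod>u<n. f u (skip l (p u)))
      \<inter> Poly_Mapping.keys (\<Prod>u<n. f u (skip l' (q u))) = {}"
    if p: "p \<in> optimal_perms n (delcol l T)" and q: "q \<in> optimal_perms n (delcol l' T)" for p q
  proof -
    obtain j where j: "j < n" "skip l' j = l" using ex_skip_eq[OF assms(2,1)] assms(3) by auto
    have "q ` {..<n} = {..<n}" using q by (simp add: optimal_perms_def permutes_image)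
    with j(1) obtain u where u: "u < n" "q u = j" by (metis imageE lessThan_iff)
    have "skip l (p u) \<noteq> skip l' (q u)" using skip_neq j(2) u(2) by simp
    moreover have "\<forall>u<n. skip l (p u) < Suc n" "\<forall>u<n. skip l' (q u) < Suc n"
      using p q by (simp_all add: skip_less_Suc optimal_perms_less)
    ultimately show ?thesis using keys_prod_disjoint[OF _ _ u(1)] by simp
  qed
  then show ?thesis unfolding keys_cram by blast
qed

end

lemma multihom_mvars: "multihom C J d p \<Longrightarrow> mvars p \<subseteq> (\<Union>i\<in>J. C i)"
  by (auto simp: multihom_def mvars_def)

lemma deg_in_sum: "deg_in S (\<Sum>u\<in>I. m u) = (\<Sum>u\<in>I. deg_in S (m u))"
  unfolding deg_in_def lookup_sum by (rule sum.swap)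

lemma deg_in_eq_0: "Poly_Mapping.keys m \<inter> S = {} \<Longrightarrow> deg_in S m = 0"
  by (auto simp: deg_in_def in_keys_iff intro!: sum.neutral)

lemma disjoint_family_on_blocks:
  assumes "disjoint_family_on J I" "disjoint_family_on C (\<Union>u\<in>I. J u)"
  shows "disjoint_family_on (\<lambda>u. \<Union>i\<in>J u. C i) I"
  unfolding disjoint_family_on_def
proof (intro ballI impI)
  fix u v assume uv: "u \<in> I" "v \<in> I" "u \<noteq> v"
  have "C i \<inter> C j = {}" if ij: "i \<in> J u" "j \<in> J v" for i j
  proof -
    have "i \<noteq> j" using disjoint_family_onD[OF assms(1) uv] ij by blast
    then show ?thesis using disjoint_family_onD[OF assms(2)] ij uv by blast
  qed
  then show "(\<Union>i\<in>J u. C i) \<inter> (\<Union>i\<in>J v. C i) = {}" by blast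
qed

lemma multihom_prod:
  fixes g :: "'i \<Rightarrow> mpoly"
  assumes "finite I" and hom: "\<And>u. u \<in> I \<Longrightarrow> multihom C (J u) (d u) (g u)"
    and J_disj: "disjoint_family_on J I" and C_disj: "disjoint_family_on C (\<Union>u\<in>I. J u)"
  shows "multihom C (\<Union>u\<in>I. J u) (\<lambda>i. \<Sum>u\<in>I. if i \<in> J u then d u i else 0) (\<Prod>u\<in>I. g u)"
proof -
  define V where "V u = (\<Union>i\<in>J u. C i)" for u
  have vars: "mvars (g u) \<subseteq> V u" if "u \<in> I" for u
    using multihom_mvars[OF hom[OF that]] by (simp add: V_def)
  have V_disj: "disjoint_family_on V I"
    unfolding V_def using J_disj C_disj by (rule disjoint_family_on_blocks)
  have "(\<Prod>u\<in>I. g u) \<noteq> 0"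
    using prod_nonzero_disjoint_mvars[OF assms(1) vars V_disj] hom by (simp add: multihom_def)
  moreover have "Poly_Mapping.keys M \<subseteq> (\<Union>i\<in>(\<Union>u\<in>I. J u). C i)
      \<and> (\<forall>i\<in>(\<Union>u\<in>I. J u). deg_in (C i) M = (\<Sum>u\<in>I. if i \<in> J u then d u i else 0))"
    if M: "M \<in> Poly_Mapping.keys (\<Prod>u\<in>I. g u)" for M
  proof -
    obtain m where m: "\<forall>u\<in>I. m u \<in> Poly_Mapping.keys (g u)" "M = (\<Sum>u\<in>I. m u)"
      using keys_prod_disjoint_mvars[OF assms(1) vars V_disj] M by auto
    have m_vars: "Poly_Mapping.keys (m u) \<subseteq> V u" if "u \<in> I" for u
      using vars[OF that] m(1) that by (simp add: mvars_subset_iff)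
    have "Poly_Mapping.keys M \<subseteq> (\<Union>u\<in>I. Poly_Mapping.keys (m u))"
      unfolding m(2) by (rule keys_sum)
    also have "\<dots> \<subseteq> (\<Union>i\<in>(\<Union>u\<in>I. J u). C i)"
      using m_vars unfolding V_def by blast
    finally have "Poly_Mapping.keys M \<subseteq> (\<Union>i\<in>(\<Union>u\<in>I. J u). C i)" .
    moreover have "deg_in (C i) (m u) = (if i \<in> J u then d u i else 0)"
      if u: "u \<in> I" and i: "i \<in> (\<Union>u\<in>I. J u)" for u i
    proof (cases "i \<in> J u")
      case True
      have "multihom C (J u) (d u) (g u)" by (rule hom[OF u])
      then show ?thesis using m(1) u True unfolding multihom_def by simp
    next
      case False
      have "C i \<inter> C j = {}" if "j \<in> J u" for j
        using disjoint_family_onD[OF C_disj, of i j] that u i False by blast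
      then have "Poly_Mapping.keys (m u) \<inter> C i = {}"
        using m_vars[OF u] unfolding V_def by blast
      then show ?thesis using False by (simp add: deg_in_eq_0)
    qed
    ultimately show ?thesis using m(2) by (simp add: deg_in_sum)
  qed
  ultimately show ?thesis unfolding multihom_def by blast
qed

lemma multihom_mono_blocks:
  assumes "multihom C J d p" "J \<subseteq> K" "disjoint_family_on C K" "\<And>i. i \<in> K - J \<Longrightarrow> d i = 0"
  shows "multihom C K d p"
proof -
  have "Poly_Mapping.keys m \<subseteq> (\<Union>i\<in>K. C i) \<and> (\<forall>i\<in>K. deg_in (C i) m = d i)"
    if m: "m \<in> Poly_Mapping.keys p" for m
  proof -
    have m_vars: "Poly_Mapping.keys m \<subseteq> (\<Union>j\<in>J. C j)" and deg: "\<forall>j\<in>J. deg_in (C j) m = d j"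
      using assms(1) m unfolding multihom_def by auto
    have "deg_in (C i) m = d i" if i: "i \<in> K - J" for i
    proof -
      have "C i \<inter> C j = {}" if "j \<in> J" for j
        using disjoint_family_onD[OF assms(3), of i j] i that assms(2) by blast
      then have "Poly_Mapping.keys m \<inter> C i = {}" using m_vars by blast
      then show ?thesis using deg_in_eq_0 assms(4)[OF i] by simp
    qed
    moreover have "Poly_Mapping.keys m \<subseteq> (\<Union>i\<in>K. C i)" using m_vars assms(2) by blast
    ultimately show ?thesis using deg by blast
  qed
  moreover have "p \<noteq> 0" using assms(1) by (simp add: multihom_def)
  ultimately show ?thesis unfolding multihom_def by blast
qed

lemma multihom_if_keys_subset:
  assumes "p \<noteq> 0" "Poly_Mapping.keys p \<subseteq> (\<Union>a\<in>A. Poly_Mapping.keys (g a))"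
    and "\<And>a. a \<in> A \<Longrightarrow> multihom C J d (g a)"
  shows "multihom C J d p"
proof -
  have "Poly_Mapping.keys m \<subseteq> (\<Union>i\<in>J. C i) \<and> (\<forall>i\<in>J. deg_in (C i) m = d i)"
    if m_key: "m \<in> Poly_Mapping.keys p" for m
  proof -
    obtain a where "a \<in> A" "m \<in> Poly_Mapping.keys (g a)" using assms(2) m_key by blast
    then show ?thesis using assms(3) unfolding multihom_def by blast
  qed
  then show ?thesis using assms(1) unfolding multihom_def by blast
qed

lemma row_separated_matrix_if_multihom:
  fixes f :: "nat \<Rightarrow> nat \<Rightarrow> mpoly"
  assumes hom: "\<And>u l. u < n \<Longrightarrow> l < Suc n \<Longrightarrow> multihom C (J u) (d u) (f u l)"
    and "disjoint_family_on J {..<n}" "disjoint_family_on C (\<Union>u<n. J u)"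
    and "\<And>u l l'. u < n \<Longrightarrow> l < Suc n \<Longrightarrow> l' < Suc n \<Longrightarrow> l \<noteq> l' \<Longrightarrow>
      Poly_Mapping.keys (f u l) \<inter> Poly_Mapping.keys (f u l') = {}"
  shows "row_separated_matrix n (\<lambda>u. \<Union>i\<in>J u. C i) f"
proof
  show "f u l \<noteq> 0" if "u < n" "l < Suc n" for u l
    using hom[OF that] by (simp add: multihom_def)
  show "mvars (f u l) \<subseteq> (\<Union>i\<in>J u. C i)" if "u < n" "l < Suc n" for u l
    using multihom_mvars[OF hom[OF that]] .
  show "disjoint_family_on (\<lambda>u. \<Union>i\<in>J u. C i) {..<n}"
    using assms(2,3) by (rule disjoint_family_on_blocks)
qed (rule assms(4))

lemma multihom_cram:
  fixes f :: "nat \<Rightarrow> nat \<Rightarrow> mpoly"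
  assumes hom: "\<And>u l. u < n \<Longrightarrow> l < Suc n \<Longrightarrow> multihom C (J u) (d u) (f u l)"
    and J_family: "disjoint_family_on J {..<n}" and C_family: "disjoint_family_on C K"
    and J_blocks: "(\<Union>u<n. J u) \<subseteq> K"
    and entries: "\<And>u l l'. u < n \<Longrightarrow> l < Suc n \<Longrightarrow> l' < Suc n \<Longrightarrow> l \<noteq> l' \<Longrightarrow>
      Poly_Mapping.keys (f u l) \<inter> Poly_Mapping.keys (f u l') = {}"
  shows "multihom C K (\<lambda>i. \<Sum>u<n. if i \<in> J u then d u i else 0) (cram n T f l)"
proof -
  have C_blocks: "disjoint_family_on C (\<Union>u<n. J u)"
    using disjoint_family_on_mono[OF J_blocks C_family] .
  interpret row_separated_matrix n "\<lambda>u. \<Union>i\<in>J u. C i" f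
    by (rule row_separated_matrix_if_multihom[OF hom J_family C_blocks entries])
  have prod_multihom:
    "multihom C K (\<lambda>i. \<Sum>u<n. if i \<in> J u then d u i else 0) (\<Prod>u<n. f u (\<sigma> u))"
    if \<sigma>: "\<forall>u<n. \<sigma> u < Suc n" for \<sigma>
  proof (rule multihom_mono_blocks[OF _ J_blocks C_family])
    have "multihom C (J u) (d u) (f u (\<sigma> u))" if "u \<in> {..<n}" for u
      using hom \<sigma> that by simp
    then show "multihom C (\<Union>u<n. J u) (\<lambda>i. \<Sum>u<n. if i \<in> J u then d u i else 0)
        (\<Prod>u<n. f u (\<sigma> u))"
      by (rule multihom_prod[OF finite_lessThan _ J_family C_blocks])
  qed simp
  show ?thesis
  proof (rule multihom_if_keys_subset[OF cram_nonzero keys_cram[THEN equalityD1]])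
    fix p assume "p \<in> optimal_perms n (delcol l T)"
    then have "\<forall>u<n. skip l (p u) < Suc n" by (simp add: skip_less_Suc optimal_perms_less)
    then show "multihom C K (\<lambda>i. \<Sum>u<n. if i \<in> J u then d u i else 0)
        (\<Prod>u<n. f u (skip l (p u)))"
      by (rule prod_multihom)
  qed
qed

theorem lemma2p10:
  fixes k n :: nat
    and C :: "nat \<Rightarrow> nat set"
    and J :: "nat \<Rightarrow> nat set"
    and d :: "nat \<Rightarrow> nat \<Rightarrow> nat"
    and f :: "nat \<Rightarrow> nat \<Rightarrow> mpoly"
    and T :: "nat \<Rightarrow> nat \<Rightarrow> real"
  assumes C_fin: "\<And>i. i < k \<Longrightarrow> finite (C i)"
    and C_disj: "\<And>i i'. i < k \<Longrightarrow> i' < k \<Longrightarrow> i \<noteq> i' \<Longrightarrow> C i \<inter> C i' = {}"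
    and J_sub: "\<And>u. u < n \<Longrightarrow> J u \<subseteq> {..<k}"
    and hom: "\<And>u l. u < n \<Longrightarrow> l < Suc n \<Longrightarrow> multihom C (J u) (d u) (f u l)"
    and J_disj: "\<And>u v. u < n \<Longrightarrow> v < n \<Longrightarrow> u \<noteq> v \<Longrightarrow> J u \<inter> J v = {}"
    and mono_disj: "\<And>u l m. u < n \<Longrightarrow> l < Suc n \<Longrightarrow> m < Suc n \<Longrightarrow> l \<noteq> m \<Longrightarrow>
                      Poly_Mapping.keys (f u l) \<inter> Poly_Mapping.keys (f u m) = {}"
  shows "(\<exists>D. \<forall>l < Suc n. multihom C {..<k} D (cram n T f l))
         \<and> (\<forall>l \<sigma> \<tau>. l < Suc n \<longrightarrow>
           bij_betw \<sigma> {..<n} ({..<Suc n} - {l}) \<longrightarrow>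
           bij_betw \<tau> {..<n} ({..<Suc n} - {l}) \<longrightarrow>
           (\<exists>u<n. \<sigma> u \<noteq> \<tau> u) \<longrightarrow>
           (\<Sum>u<n. T u (\<sigma> u)) = tdet n (delcol l T) \<longrightarrow>
           (\<Sum>u<n. T u (\<tau> u)) = tdet n (delcol l T) \<longrightarrow>
           Poly_Mapping.keys (\<Prod>u<n. f u (\<sigma> u)) \<inter> Poly_Mapping.keys (\<Prod>u<n. f u (\<tau> u)) = {})
         \<and> (\<forall>l m. l < Suc n \<longrightarrow> m < Suc n \<longrightarrow> l \<noteq> m \<longrightarrow>
           Poly_Mapping.keys (cram n T f l) \<inter> Poly_Mapping.keys (cram n T f m) = {})"
proof -
  have C_family: "disjoint_family_on C {..<k}"
    using C_disj by (auto simp: disjoint_family_on_def)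
  have J_family: "disjoint_family_on J {..<n}"
    using J_disj by (auto simp: disjoint_family_on_def)
  have J_blocks: "(\<Union>u<n. J u) \<subseteq> {..<k}" using J_sub by blast
  interpret row_separated_matrix n "\<lambda>u. \<Union>i\<in>J u. C i" f
    by (rule row_separated_matrix_if_multihom
        [where f = f, OF hom J_family disjoint_family_on_mono[OF J_blocks C_family] mono_disj])
  show ?thesis
  proof (intro conjI allI impI)
    show "\<exists>D. \<forall>l<Suc n. multihom C {..<k} D (cram n T f l)"
      using multihom_cram[where f = f, OF hom J_family C_family J_blocks mono_disj] by blast
  next
    fix l \<sigma> \<tau>
    assume "l < Suc n"
      and selections: "bij_betw \<sigma> {..<n} ({..<Suc n} - {l})" "bij_betw \<tau> {..<n} ({..<Suc n} - {l})"
        "\<exists>u<n. \<sigma> u \<noteq> \<tau> u"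
      and "(\<Sum>u<n. T u (\<sigma> u)) = tdet n (delcol l T)" "(\<Sum>u<n. T u (\<tau> u)) = tdet n (delcol l T)"
    show "Poly_Mapping.keys (\<Prod>u<n. f u (\<sigma> u)) \<inter> Poly_Mapping.keys (\<Prod>u<n. f u (\<tau> u)) = {}"
      using selections by (rule keys_prod_disjoint_if_bij)
  next
    fix l m assume "l < Suc n" "m < Suc n" "l \<noteq> m"
    then show "Poly_Mapping.keys (cram n T f l) \<inter> Poly_Mapping.keys (cram n T f m) = {}"
      by (rule keys_cram_disjoint)
  qed
qed

end
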